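(* Let $\mathbf{A}$ be a $0$-$1$ matrix of full row rank with $I$ columns and at least one $1$ in every column, let $RM_{\boldsymbol p}(\mathbf{A})=\{\boldsymbol p\in\mathbb R^I_{>0}:\mathbf1'\boldsymbol p=1,\ \log\boldsymbol p=\mathbf A'\boldsymbol\theta\text{ for some }\boldsymbol\theta\}$, let $\mathbf D$ be a $K\times I$ matrix whose rows form a basis of $\mathrm{Ker}(\mathbf A)$, and let $\boldsymbol p_0\in RM_{\boldsymbol p}(\mathbf A)$, $\boldsymbol Y_N\sim\mathrm{Mult}(N,\boldsymbol p_0)$. Suppose the model has the overall effect, i.e. the vector $\mathbf 1$ lies in the row space of $\mathbf A$. Then the covariance matrix of the asymptotic normal distribution (as $N\to\infty$) of $N^{1/2}(\hat{\boldsymbol p}_N-\boldsymbol p_0)$ conditional on existence of the MLE, and of $N^{1/2}(\tilde{\boldsymbol p}_N-\boldsymbol p_0)$, namely $\mathbf M\boldsymbol\Sigma\mathbf M'$ with $\boldsymbol\Sigma=\Delta[\boldsymbol p_0]-\boldsymbol p_0\boldsymbol p_0'$, $\mathbf H=(\mathbf 1,\Delta[\boldsymbol p_0^{-1}]\mathbf D')$, $\mathbf M=\mathbf I-\Delta[\boldsymbol p_0]\mathbf H(\mathbf H'\Delta[\boldsymbol p_0]\mathbf H)^{-1}\mathbf H'$, is equal to $$\boldsymbol\Sigma-\mathbf D'(\mathbf D\Delta[\boldsymbol p_0^{-1}]\mathbf D')^{-1}\mathbf D.$$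
   Context: $\Delta[\boldsymbol v]$ is the diagonal matrix with diagonal $\boldsymbol v$; vector powers and logs are componentwise. $\hat{\boldsymbol p}_N$ is the MLE of $\boldsymbol p_0$ under the model (maximizer of $\boldsymbol Y_N'\log\boldsymbol p$ over the model); $\tilde{\boldsymbol p}_N$ equals $\hat{\boldsymbol p}_N$ when the MLE exists and $(1/I)\mathbf1$ otherwise. *)

theory Defs
  imports "HOL-Analysis.Analysis"
begin

definition Delta :: "real ^ 'n \<Rightarrow> real ^ 'n ^ 'n" where
  "Delta v = (\<chi> i j. if i = j then v $ i else 0)"

definition outer :: "real ^ 'n \<Rightarrow> real ^ 'n ^ 'n" where
  "outer p = (\<chi> i j. p $ i * p $ j)"

definition vinv :: "real ^ 'n \<Rightarrow> real ^ 'n" where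
  "vinv p = (\<chi> i. inverse (p $ i))"

definition vlog :: "real ^ 'n \<Rightarrow> real ^ 'n" where
  "vlog p = (\<chi> i. ln (p $ i))"

definition RM :: "real ^ 'i ^ 'j \<Rightarrow> (real ^ 'i) set" where
  "RM A = {p. (\<forall>i. p $ i > 0) \<and> sum (\<lambda>i. p $ i) UNIV = 1 \<and>
              (\<exists>\<theta>. vlog p = transpose A *v \<theta>)}"

text \<open>H = (1, Delta[p^-1] D'), an I x (1+K) matrix; the column Inl () is the column of ones.\<close>
definition Hmat :: "real ^ 'i \<Rightarrow> real ^ 'i ^ 'k \<Rightarrow> real ^ (unit + 'k) ^ 'i" where
  "Hmat p D = (\<chi> i c. case c of Inl _ \<Rightarrow> 1 | Inr k \<Rightarrow> D $ k $ i / p $ i)"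

end

theory Submission
  imports Defs
begin

text \<open>
  Write \<open>P = \<Delta>[p\<^sub>0]\<close> and \<open>G = D \<Delta>[p\<^sub>0\<^sup>-\<^sup>1] D'\<close>. Every row of \<open>D\<close> lies in
  \<open>Ker A\<close> and \<open>1\<close> lies in the row space of \<open>A\<close>, so \<open>D 1 = 0\<close>; together with
  \<open>1' p\<^sub>0 = 1\<close> this makes \<open>H' P H\<close> block diagonal with blocks \<open>1\<close> and \<open>G\<close>, and
  \<open>G\<close> is positive definite because the rows of \<open>D\<close> are independent. Hence
  \<open>M = I - p\<^sub>0 1' - D' G\<^sup>-\<^sup>1 D P\<^sup>-\<^sup>1\<close>, and a direct computation gives
  \<open>M \<Sigma> = S\<close> and \<open>M D' = 0\<close> for \<open>S = \<Sigma> - D' G\<^sup>-\<^sup>1 D\<close>. Then \<open>M S = S\<close>, and since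
  \<open>S\<close> is symmetric, \<open>M \<Sigma> M' = S M' = (M S)' = S\<close>.
\<close>

lemma matrix_inv_unique:
  fixes A :: "'a::semiring_1^'n^'n"
  assumes AB: "A ** B = mat 1" and BA: "B ** A = mat 1"
  shows "matrix_inv A = B"
proof -
  have inv: "matrix_inv A ** A = mat 1"
    unfolding matrix_inv_def by (rule someI2[of _ B]) (use AB BA in auto)
  have "matrix_inv A = matrix_inv A ** (A ** B)" by (simp add: AB)
  also have "\<dots> = B" by (simp add: matrix_mul_assoc inv)
  finally show ?thesis .
qed

lemma invertible_matrix_inv:
  fixes A :: "'a::semiring_1^'n^'n"
  assumes "invertible A"
  shows "A ** matrix_inv A = mat 1" and "matrix_inv A ** A = mat 1"
proof -
  obtain B where "A ** B = mat 1" "B ** A = mat 1"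
    using assms unfolding invertible_def by blast
  moreover from this have "matrix_inv A = B" by (rule matrix_inv_unique)
  ultimately show "A ** matrix_inv A = mat 1" "matrix_inv A ** A = mat 1" by simp_all
qed

lemma right_inverse_symmetric:
  fixes A :: "'a::comm_semiring_1^'n^'n"
  assumes AB: "A ** B = mat 1" and A_sym: "transpose A = A"
  shows "transpose B = B"
proof -
  have BtA: "transpose B ** A = mat 1"
    using AB by (metis A_sym matrix_transpose_mul transpose_mat)
  have "transpose B = transpose B ** (A ** B)" by (simp add: AB)
  also have "\<dots> = B" by (simp add: matrix_mul_assoc BtA)
  finally show ?thesis .
qed

lemma matrix_sub_ldistrib: "(A::'a::ring_1^'n^'m) ** (B - C) = A ** B - A ** C"
  by (simp add: vec_eq_iff matrix_matrix_mult_def algebra_simps sum_subtractf)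

lemma matrix_sub_rdistrib: "((A::'a::ring_1^'n^'m) - B) ** C = A ** C - B ** C"
  by (simp add: vec_eq_iff matrix_matrix_mult_def algebra_simps sum_subtractf)

lemma matrix_add_rdistrib: "((A::'a::semiring_1^'n^'m) + B) ** C = A ** C + B ** C"
  by (simp add: vec_eq_iff matrix_matrix_mult_def algebra_simps sum.distrib)

lemma transpose_diff: "transpose ((A::'a::ab_group_add^'n^'m) - B) = transpose A - transpose B"
  by (simp add: vec_eq_iff transpose_def)

lemma matrix_mult_component: "((X::'a::semiring_1^'n^'m) ** Y) $ i $ j = (\<Sum>k\<in>UNIV. X$i$k * Y$k$j)"
  by (simp add: matrix_matrix_mult_def)

lemma transpose_component: "transpose X $ i $ j = X $ j $ i"
  by (simp add: transpose_def)

lemma transpose_Delta: "transpose (Delta v) = Delta v"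
  by (simp add: vec_eq_iff transpose_def Delta_def)

lemma transpose_outer: "transpose (outer v) = outer v"
  by (simp add: vec_eq_iff transpose_def outer_def)

lemma Delta_mult_component: "(Delta v ** X) $ i $ j = v$i * X$i$j"
  unfolding Delta_def matrix_matrix_mult_def
  by (simp add: if_distrib[where f="\<lambda>x. x * _"] cong: if_cong)

lemma mult_Delta_component: "(X ** Delta v) $ i $ j = X$i$j * v$j"
  unfolding Delta_def matrix_matrix_mult_def
  by (simp add: if_distrib[where f="\<lambda>x. _ * x"] cong: if_cong)

lemma sum_UNIV_Plus_unit:
  "(\<Sum>c\<in>(UNIV::(unit+'k::finite) set). f c) = f (Inl ()) + (\<Sum>k\<in>UNIV. f (Inr k))"
  by (subst UNIV_Plus_UNIV[symmetric], subst sum.Plus) (auto simp: UNIV_unit)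

definition block_diag :: "real \<Rightarrow> real^'k^'k \<Rightarrow> real^(unit+'k)^(unit+'k)" where
  "block_diag a X = (\<chi> c d. case (c, d) of
     (Inl _, Inl _) \<Rightarrow> a | (Inr k, Inr l) \<Rightarrow> X $ k $ l | _ \<Rightarrow> 0)"

lemma block_diag_mult: "block_diag a X ** block_diag b Y = block_diag (a * b) (X ** Y)"
  unfolding block_diag_def matrix_matrix_mult_def
  by (auto simp: vec_eq_iff sum_UNIV_Plus_unit split: sum.splits)

lemma mat_1_eq_block_diag: "(mat 1 :: real^(unit+'k::finite)^(unit+'k)) = block_diag 1 (mat 1)"
  unfolding block_diag_def mat_def by (auto simp: vec_eq_iff split: sum.splits)

lemma matrix_inv_block_diag:
  assumes "X ** Y = mat 1" "Y ** X = mat 1"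
  shows "matrix_inv (block_diag 1 X) = block_diag 1 Y"
  by (rule matrix_inv_unique) (simp_all add: block_diag_mult assms flip: mat_1_eq_block_diag)

lemma transpose_mult_eq_0_imp_eq_0:
  fixes D :: "real^'n^'m"
  assumes "inj (\<lambda>k. row k D)" "independent (rows D)" "transpose D *v x = 0"
  shows "x = 0"
proof -
  have rows_D: "rows D = range (\<lambda>k. row k D)" by (auto simp: rows_def)
  define u where "u v = x $ inv (\<lambda>k. row k D) v" for v
  have "(\<Sum>v\<in>rows D. u v *\<^sub>R v) = (\<Sum>k\<in>UNIV. x$k *\<^sub>R row k D)"
    unfolding rows_D u_def by (subst sum.reindex[OF assms(1)]) (simp add: inv_f_f[OF assms(1)])
  also have "\<dots> = transpose D *v x"
    by (simp only: matrix_mult_sum column_transpose scalar_mult_eq_scaleR)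
  finally have combination: "(\<Sum>v\<in>rows D. u v *\<^sub>R v) = 0" using assms(3) by simp
  have "u (row k D) = 0" for k
    by (rule independentD[OF assms(2) _ subset_refl combination]) (auto simp: rows_D)
  then show ?thesis by (simp add: u_def inv_f_f[OF assms(1)] vec_eq_iff)
qed

lemma weighted_gram_invertible:
  fixes D :: "real^'n^'m"
  assumes w_pos: "\<And>i. w $ i > 0" and D_ker: "\<And>x. transpose D *v x = 0 \<Longrightarrow> x = 0"
  shows "invertible (D ** Delta w ** transpose D)"
proof -
  have "x = 0" if Gx: "(D ** Delta w ** transpose D) *v x = 0" for x
  proof -
    define y where "y = transpose D *v x"
    have "0 = inner x ((D ** Delta w ** transpose D) *v x)" by (simp add: Gx)
    also have "\<dots> = inner x (D *v (Delta w *v y))"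
      by (simp only: y_def matrix_vector_mul_assoc matrix_mul_assoc)
    also have "\<dots> = inner y (Delta w *v y)"
      by (simp add: y_def flip: dot_lmul_matrix)
    also have "Delta w *v y = (\<chi> i. w$i * y$i)"
      by (simp add: vec_eq_iff matrix_vector_mult_def Delta_def
          if_distrib[where f="\<lambda>x. x * _"] cong: if_cong)
    also have "inner y (\<chi> i. w$i * y$i) = (\<Sum>i\<in>UNIV. w$i * (y$i)\<^sup>2)"
      by (simp add: inner_vec_def power2_eq_square mult_ac)
    finally have "(\<Sum>i\<in>UNIV. w$i * (y$i)\<^sup>2) = 0" by simp
    then have summands_0: "\<forall>i\<in>UNIV. w$i * (y$i)\<^sup>2 = 0"
      by (subst (asm) sum_nonneg_eq_0_iff) (simp_all add: less_imp_le w_pos)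
    have "y $ i = 0" for i using summands_0 w_pos[of i] by (auto simp: less_le)
    then show ?thesis using D_ker[of x] by (simp add: vec_eq_iff y_def)
  qed
  then show ?thesis
    by (simp add: invertible_left_inverse matrix_left_invertible_ker)
qed

lemma kernel_orthogonal_ones:
  assumes "(\<chi> i. 1) = transpose A *v c" "A *v x = 0"
  shows "(\<Sum>i\<in>UNIV. x $ i) = (0::real)"
proof -
  have "c v* A = (\<chi> i. 1)" using assms(1) by simp
  then have "(\<Sum>i\<in>UNIV. x $ i) = inner (c v* A) x"
    by (simp add: inner_vec_def)
  also have "\<dots> = inner c (A *v x)" by (rule dot_lmul_matrix)
  finally show ?thesis by (simp add: assms(2))
qed

lemma Hmat_gram:
  assumes p_nz: "\<And>i. p $ i \<noteq> 0" and p_sum: "(\<Sum>i\<in>UNIV. p $ i) = 1"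
    and D_sum: "\<And>k. (\<Sum>i\<in>UNIV. D $ k $ i) = 0"
  shows "transpose (Hmat p D) ** Delta p ** Hmat p D
           = block_diag 1 (D ** Delta (vinv p) ** transpose D)"
proof -
  let ?H = "Hmat p D"
  have entry: "(transpose ?H ** Delta p ** ?H) $ c $ d = (\<Sum>i\<in>UNIV. ?H$i$c * p$i * ?H$i$d)" for c d
    unfolding matrix_mult_component[of "transpose ?H ** Delta p"] mult_Delta_component
      transpose_component ..
  have cancel: "x / p$i * p$i = x" "p$i * (x / p$i) = x" for x i
    using p_nz[of i] by simp_all
  have gram_entry: "(D ** Delta (vinv p) ** transpose D) $ k $ l = (\<Sum>i\<in>UNIV. D$k$i * D$l$i / p$i)"
    for k l
    unfolding matrix_mult_component[of "D ** Delta (vinv p)"] mult_Delta_component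
      transpose_component by (simp add: vinv_def divide_inverse mult_ac)
  have "(transpose ?H ** Delta p ** ?H) $ c $ d
          = block_diag 1 (D ** Delta (vinv p) ** transpose D) $ c $ d" for c d
    unfolding entry
    by (cases c; cases d) (simp_all add: Hmat_def block_diag_def p_sum cancel D_sum gram_entry p_nz)
  then show ?thesis by (simp add: vec_eq_iff)
qed

text \<open>Below, \<open>\<chi> i j. p $ i\<close> is the matrix \<open>p 1'\<close> and \<open>\<chi> i. p\<close> is \<open>1 p'\<close>.\<close>

lemma Hmat_projection:
  assumes p_nz: "\<And>i. p $ i \<noteq> 0"
  shows "Delta p ** Hmat p D ** block_diag 1 B ** transpose (Hmat p D)
           = (\<chi> i j. p $ i) + transpose D ** B ** D ** Delta (vinv p)"
proof -
  let ?H = "Hmat p D"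
  have HB: "(?H ** block_diag 1 B) $ i $ c
              = (case c of Inl _ \<Rightarrow> 1 | Inr l \<Rightarrow> (\<Sum>k\<in>UNIV. D$k$i / p$i * B$k$l))" for i c
    by (cases c) (simp_all add: matrix_mult_component sum_UNIV_Plus_unit Hmat_def block_diag_def)
  have "(Delta p ** ?H ** block_diag 1 B ** transpose ?H) $ i $ j
          = ((\<chi> i j. p $ i) + transpose D ** B ** D ** Delta (vinv p)) $ i $ j" for i j
  proof -
    have "(Delta p ** ?H ** block_diag 1 B ** transpose ?H) $ i $ j
            = p$i * (?H ** block_diag 1 B ** transpose ?H) $ i $ j"
      by (simp only: matrix_mul_assoc[symmetric] Delta_mult_component)
    also have "\<dots> = p$i * (1 + (\<Sum>l\<in>UNIV. (\<Sum>k\<in>UNIV. D$k$i / p$i * B$k$l) * (D$l$j / p$j)))"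
      unfolding matrix_mult_component[of "?H ** block_diag 1 B"] sum_UNIV_Plus_unit HB
        transpose_component
      by (simp add: Hmat_def)
    also have "\<dots> = p$i + (\<Sum>l\<in>UNIV. (\<Sum>k\<in>UNIV. D$k$i * B$k$l) * D$l$j) / p$j"
      using p_nz[of i] p_nz[of j]
      by (simp add: distrib_left sum_distrib_left sum_divide_distrib sum_distrib_right field_simps)
    also have "\<dots> = ((\<chi> i j. p $ i) + transpose D ** B ** D ** Delta (vinv p)) $ i $ j"
      unfolding vector_add_component mult_Delta_component
      by (simp add: matrix_mult_component transpose_component vinv_def divide_inverse)
    finally show ?thesis .
  qed
  then show ?thesis by (simp add: vec_eq_iff)
qed

lemma multinomial_cov_left_annihilator:
  assumes "(\<Sum>i\<in>UNIV. p $ i) = 1"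
  shows "(\<chi> i j. p $ i) ** (Delta p - outer p) = 0"
proof -
  have "((\<chi> i j. p $ i) ** outer p) $ i $ j = p$i * p$j * (\<Sum>k\<in>UNIV. p$k)" for i j
    by (simp add: outer_def matrix_mult_component sum_distrib_left mult_ac)
  then show ?thesis
    by (simp add: vec_eq_iff matrix_sub_ldistrib mult_Delta_component assms)
qed

lemma Delta_vinv_mult_multinomial_cov:
  assumes "\<And>i. p $ i \<noteq> 0"
  shows "Delta (vinv p) ** (Delta p - outer p) = mat 1 - (\<chi> i. p)"
  unfolding vec_eq_iff matrix_sub_ldistrib vector_minus_component Delta_mult_component
  by (simp add: Delta_def outer_def mat_def vinv_def assms)

lemma zero_row_sums_mult_eq_0:
  assumes "\<And>k. (\<Sum>i\<in>UNIV. D $ k $ i) = 0"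
  shows "D ** (\<chi> i. p) = 0" and "(\<chi> i j. p $ i) ** transpose D = 0"
  by (simp_all add: vec_eq_iff matrix_mult_component transpose_component assms
      flip: sum_distrib_right sum_distrib_left)

lemma sandwich_eq:
  fixes M X S :: "'a::comm_semiring_1^'n^'n"
  assumes "M ** X = S" "M ** S = S" "transpose S = S"
  shows "M ** X ** transpose M = S"
proof -
  have "M ** X ** transpose M = transpose (M ** transpose S)"
    by (simp add: assms(1) matrix_transpose_mul)
  then show ?thesis by (simp add: assms(2,3))
qed

lemma multinomial_cov_projection:
  assumes p_nz: "\<And>i. p $ i \<noteq> 0" and p_sum: "(\<Sum>i\<in>UNIV. p $ i) = 1"
    and D_sum: "\<And>k. (\<Sum>i\<in>UNIV. D $ k $ i) = 0"
    and BG: "B ** (D ** Delta (vinv p) ** transpose D) = mat 1" and B_sym: "transpose B = B"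
  defines "\<Sigma> \<equiv> Delta p - outer p"
    and "M \<equiv> mat 1 - ((\<chi> i j. p $ i) + transpose D ** B ** D ** Delta (vinv p))"
  shows "M ** \<Sigma> ** transpose M = \<Sigma> - transpose D ** B ** D"
proof (rule sandwich_eq)
  note D_zero = zero_row_sums_mult_eq_0[OF D_sum]
  have "transpose D ** B ** D ** Delta (vinv p) ** \<Sigma>
          = transpose D ** B ** (D ** (Delta (vinv p) ** \<Sigma>))"
    by (simp add: matrix_mul_assoc)
  also have "\<dots> = transpose D ** B ** D"
    unfolding \<Sigma>_def Delta_vinv_mult_multinomial_cov[OF p_nz]
    by (simp add: matrix_sub_ldistrib D_zero)
  finally show M\<Sigma>: "M ** \<Sigma> = \<Sigma> - transpose D ** B ** D"
    using multinomial_cov_left_annihilator[OF p_sum]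
    by (simp add: M_def \<Sigma>_def matrix_sub_rdistrib matrix_add_rdistrib)
  have "transpose D ** B ** D ** Delta (vinv p) ** transpose D
          = transpose D ** (B ** (D ** Delta (vinv p) ** transpose D))"
    by (simp add: matrix_mul_assoc)
  then have "M ** transpose D = 0"
    by (simp add: M_def matrix_sub_rdistrib matrix_add_rdistrib D_zero BG)
  then show "M ** (\<Sigma> - transpose D ** B ** D) = \<Sigma> - transpose D ** B ** D"
    by (simp add: matrix_sub_ldistrib M\<Sigma> matrix_mul_assoc)
  show "transpose (\<Sigma> - transpose D ** B ** D) = \<Sigma> - transpose D ** B ** D"
    by (simp add: \<Sigma>_def transpose_diff transpose_Delta transpose_outer matrix_transpose_mul
        B_sym matrix_mul_assoc)
qed

theorem corollary3p9:
  fixes A :: "real ^ 'i ^ 'j" and D :: "real ^ 'i ^ 'k" and p0 :: "real ^ 'i"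
  assumes zero_one: "\<forall>j i. A $ j $ i = 0 \<or> A $ j $ i = 1"
    and col_one: "\<forall>i. \<exists>j. A $ j $ i = 1"
    and full_row_rank: "rank A = CARD('j)"
    and D_inj: "inj (\<lambda>k. row k D)"
    and D_indep: "independent (rows D)"
    and D_span: "span (rows D) = {x. A *v x = 0}"
    and p0_RM: "p0 \<in> RM A"
    and overall: "\<exists>c. (\<chi> i. 1) = transpose A *v c"
  shows "(let \<Sigma> = Delta p0 - outer p0;
              H = Hmat p0 D;
              M = mat 1 - Delta p0 ** H ** matrix_inv (transpose H ** Delta p0 ** H) ** transpose H
          in M ** \<Sigma> ** transpose M =
             \<Sigma> - transpose D ** matrix_inv (D ** Delta (vinv p0) ** transpose D) ** D)"
proof -
  have p_pos: "\<And>i. p0 $ i > 0" and p_sum: "(\<Sum>i\<in>UNIV. p0 $ i) = 1"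
    using p0_RM by (auto simp: RM_def)
  then have p_nz: "\<And>i. p0 $ i \<noteq> 0" by (metis less_irrefl)
  obtain c where c: "(\<chi> i. 1) = transpose A *v c" using overall by blast
  have D_sum: "(\<Sum>i\<in>UNIV. D $ k $ i) = 0" for k
  proof -
    have "row k D \<in> span (rows D)" by (auto simp: rows_def intro: span_base)
    then have "A *v row k D = 0" using D_span by auto
    from kernel_orthogonal_ones[OF c this] show ?thesis by (simp add: row_def)
  qed
  define G where "G = D ** Delta (vinv p0) ** transpose D"
  have "invertible G" unfolding G_def
    by (rule weighted_gram_invertible)
      (simp_all add: vinv_def p_pos transpose_mult_eq_0_imp_eq_0[OF D_inj D_indep])
  then have GB: "G ** matrix_inv G = mat 1" and BG: "matrix_inv G ** G = mat 1"
    by (rule invertible_matrix_inv)+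
  have "transpose (matrix_inv G) = matrix_inv G"
    by (rule right_inverse_symmetric[OF GB])
      (simp add: G_def matrix_transpose_mul transpose_Delta matrix_mul_assoc)
  with BG show ?thesis
    unfolding Let_def Hmat_gram[OF p_nz p_sum D_sum] G_def[symmetric]
      matrix_inv_block_diag[OF GB BG] Hmat_projection[OF p_nz]
    by (intro multinomial_cov_projection[OF p_nz p_sum D_sum]) (simp_all add: G_def)
qed

end
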